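(* Let $y_{\min}>0$ and suppose $0\le v\le y_{\min}\sum_{i=1}^{n^-}h^-_i$. Then there exist integers $\ell_1,\ell_2$ with $0\le\ell_1<\ell_2\le n^-$ such that, setting $Y:=\dfrac{v-y_{\min}\sum_{i=1}^{\ell_1}h^-_i}{\sum_{i=\ell_1+1}^{\ell_2}h^-_i}$, one has $0\le Y\le y_{\min}$ and the vector $y$ with $y_i=y_{\min}$ for $1\le i\le\ell_1$, $y_i=Y$ for $\ell_1+1\le i\le\ell_2$, and $y_i=0$ for $\ell_2+1\le i\le n^-$ is an optimal solution of $$\min_{y\in\mathbb{R}^{n^-}}\ -\sum_{i=1}^{n^-}\left(\frac{y_i}{\lambda}\right)^{1/\beta}\quad\text{s.t.}\quad y_{\min}\ge y_1\ge\cdots\ge y_{n^-}\ge 0,\qquad\sum_{i=1}^{n^-}h^-_iy_i=v.$$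
   Context: Fix $N\in\mathbb{N}$, $\beta\in(0,1)$, $\lambda>0$, and an integer $1\le n^-\le N$. A function $f:[0,1]\to\mathbb{R}$ is inverse S-shaped if it is strictly increasing, continuously differentiable, and there is $x_0\in[0,1]$ such that $f'$ is strictly decreasing on $[0,x_0]$ and strictly increasing on $[x_0,1]$. Let $W^-:[0,1]\to[0,1]$ be inverse S-shaped with $W^-(0)=0$, $W^-(1)=1$, and $h^-_i:=W^-\!\left(\frac{i}{N}\right)-W^-\!\left(\frac{i-1}{N}\right)$ for $i=1,\dots,n^-$. *)

theory Defs
  imports "HOL-Analysis.Analysis"
begin

definition inverse_S_shaped :: "(real \<Rightarrow> real) \<Rightarrow> bool" where
  "inverse_S_shaped f \<longleftrightarrow>
     strict_mono_on {0..1} f \<and>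
     (\<exists>f'. (\<forall>x\<in>{0..1}. (f has_real_derivative f' x) (at x within {0..1})) \<and>
           continuous_on {0..1} f' \<and>
           (\<exists>x0\<in>{0..1}. strict_antimono_on {0..x0} f' \<and> strict_mono_on {x0..1} f'))"

definition hminus :: "(real \<Rightarrow> real) \<Rightarrow> nat \<Rightarrow> nat \<Rightarrow> real" where
  "hminus W N i = W (real i / real N) - W ((real i - 1) / real N)"

definition feasible ::
  "(nat \<Rightarrow> real) \<Rightarrow> nat \<Rightarrow> real \<Rightarrow> real \<Rightarrow> (nat \<Rightarrow> real) \<Rightarrow> bool" where
  "feasible h n ymin v y \<longleftrightarrow>
     ymin \<ge> y 1 \<and> (\<forall>i. 1 \<le> i \<and> i < n \<longrightarrow> y i \<ge> y (i + 1)) \<and> y n \<ge> 0 \<and>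
     (\<Sum>i=1..n. h i * y i) = v"

definition objective :: "nat \<Rightarrow> real \<Rightarrow> real \<Rightarrow> (nat \<Rightarrow> real) \<Rightarrow> real" where
  "objective n \<beta> lam y = - (\<Sum>i=1..n. (y i / lam) powr (1 / \<beta>))"

definition optimal ::
  "(nat \<Rightarrow> real) \<Rightarrow> nat \<Rightarrow> real \<Rightarrow> real \<Rightarrow> real \<Rightarrow> real \<Rightarrow> (nat \<Rightarrow> real) \<Rightarrow> bool" where
  "optimal h n ymin v \<beta> lam y \<longleftrightarrow>
     feasible h n ymin v y \<and>
     (\<forall>z. feasible h n ymin v z \<longrightarrow> objective n \<beta> lam y \<le> objective n \<beta> lam z)"

end

theory Submission
  imports Defs
begin

text \<open>Every feasible \<open>y\<close> is a convex combination of the staircases \<open>stair k\<close> (equal to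
  \<open>ymin\<close> on \<open>1..k\<close> and to \<open>0\<close> beyond), \<open>k = 0..n\<close>, and the budget constraint says that the
  mixing distribution has mean \<open>v\<close> for the staircase budgets \<open>level k\<close>. A distribution with
  mean \<open>v\<close> is a mixture of one- and two-point distributions with mean \<open>v\<close>, and the two-point
  mixture of \<open>stair a\<close> and \<open>stair b\<close> with mean \<open>v\<close> is exactly the two-level vector of the
  theorem. By Jensen's inequality for the convex \<open>x \<mapsto> (x / lam) powr (1 / \<beta>)\<close>, the best
  two-level vector therefore minimises the objective.\<close>

lemma convex_on_powr_nonneg:
  fixes p :: real
  assumes "p \<ge> 1"
  shows "convex_on {0..} (\<lambda>x. x powr p)"
proof (rule convex_onI)
  have scale: "(a * b) powr p \<le> a * b powr p" if "0 \<le> a" "a \<le> 1" "0 \<le> b" for a b :: real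
  proof (cases "a = 0")
    case False
    then have "a powr p \<le> a"
      using powr_le_one_le[of a p] that assms by simp
    then show ?thesis
      using that by (simp add: powr_mult mult_right_mono)
  qed (use assms in simp)
  fix t x y :: real
  assume t: "0 < t" "t < 1" and xy: "x \<in> {0..}" "y \<in> {0..}"
  show "((1 - t) *\<^sub>R x + t *\<^sub>R y) powr p \<le> (1 - t) * x powr p + t * y powr p"
  proof (cases "x = 0 \<or> y = 0")
    case True
    then show ?thesis
      using scale[of t y] scale[of "1 - t" x] t xy assms by auto
  next
    case False
    then have "x \<in> {0<..}" "y \<in> {0<..}"
      using xy by auto
    then show ?thesis
      using convex_onD[OF powr_convex[OF assms], of t x y] t by auto
  qed
qed simp

lemma sum_convex_mixture_le:
  fixes \<phi> :: "real \<Rightarrow> real" and \<mu> :: "'j \<Rightarrow> real" and q :: "'j \<Rightarrow> 'i \<Rightarrow> real"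
  assumes "convex_on C \<phi>" and "finite J" "J \<noteq> {}"
    and "\<And>j. j \<in> J \<Longrightarrow> 0 \<le> \<mu> j" and "(\<Sum>j\<in>J. \<mu> j) = 1"
    and "\<And>j i. j \<in> J \<Longrightarrow> i \<in> I \<Longrightarrow> q j i \<in> C"
    and "\<And>j. j \<in> J \<Longrightarrow> (\<Sum>i\<in>I. \<phi> (q j i)) \<le> M"
  shows "(\<Sum>i\<in>I. \<phi> (\<Sum>j\<in>J. \<mu> j * q j i)) \<le> M"
proof -
  have "(\<Sum>i\<in>I. \<phi> (\<Sum>j\<in>J. \<mu> j * q j i)) \<le> (\<Sum>i\<in>I. \<Sum>j\<in>J. \<mu> j * \<phi> (q j i))"
    by (intro sum_mono) (use convex_on_sum[of J C \<phi> \<mu>] assms in auto)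
  also have "\<dots> = (\<Sum>j\<in>J. \<mu> j * (\<Sum>i\<in>I. \<phi> (q j i)))"
    by (subst sum.swap) (simp add: sum_distrib_left)
  also have "\<dots> \<le> (\<Sum>j\<in>J. \<mu> j * M)"
    by (intro sum_mono mult_left_mono) (use assms in auto)
  also have "\<dots> = M"
    using assms by (simp flip: sum_distrib_right)
  finally show ?thesis .
qed

text \<open>Every atom below \<open>v\<close> is paired with every atom above \<open>v\<close>. Summing the pair weights
  over the partners returns the original masses because \<open>S\<close>, the first moment of \<open>w\<close> above
  \<open>v\<close>, equals its first moment below \<open>v\<close>. If \<open>S = 0\<close> the whole mass sits at \<open>v\<close> and the
  pair sum vanishes through the junk value \<open>x / 0 = 0\<close>.\<close>

lemma mean_two_point_decomposition:
  fixes w c g :: "'k \<Rightarrow> real"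
  assumes "finite K" and w_nonneg: "\<And>k. k \<in> K \<Longrightarrow> 0 \<le> w k"
    and mean: "(\<Sum>k\<in>K. w k * (c k - v)) = 0"
  defines "L \<equiv> {k\<in>K. c k < v}" and "G \<equiv> {k\<in>K. v < c k}"
    and "S \<equiv> (\<Sum>y\<in>{k\<in>K. v < c k}. w y * (c y - v))"
  shows "(\<Sum>k\<in>K. w k * g k) = (\<Sum>k\<in>{k\<in>K. c k = v}. w k * g k)
           + (\<Sum>(x, y)\<in>L \<times> G. w x * w y / S * ((c y - v) * g x + (v - c x) * g y))"
proof -
  define E where "E = {k\<in>K. c k = v}"
  have fin: "finite E" "finite L" "finite G"
    using \<open>finite K\<close> by (auto simp: E_def L_def G_def)
  have K_split: "K = E \<union> (L \<union> G)" "E \<inter> (L \<union> G) = {}" "L \<inter> G = {}"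
    by (auto simp: E_def L_def G_def)
  have S_above: "S = (\<Sum>y\<in>G. w y * (c y - v))"
    by (simp add: S_def G_def)
  have split: "(\<Sum>k\<in>K. f k) = (\<Sum>k\<in>E. f k) + (\<Sum>k\<in>L. f k) + (\<Sum>k\<in>G. f k)" for f :: "'k \<Rightarrow> real"
    using K_split fin by (simp add: sum.union_disjoint)
  have S_below: "(\<Sum>x\<in>L. w x * (v - c x)) = S"
    using mean split[of "\<lambda>k. w k * (c k - v)"]
    by (simp add: E_def S_above algebra_simps sum_subtractf sum_negf)
  have weightless_if_S0: "w k = 0" if "S = 0" "k \<in> L \<union> G" for k
  proof -
    have "w x * (v - c x) = 0" if "x \<in> L" for x
      using sum_nonneg_eq_0_iff[OF fin(2), of "\<lambda>x. w x * (v - c x)"] S_below \<open>S = 0\<close>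
        w_nonneg that by (auto simp: L_def)
    moreover have "w y * (c y - v) = 0" if "y \<in> G" for y
      using sum_nonneg_eq_0_iff[OF fin(3), of "\<lambda>y. w y * (c y - v)"] S_above \<open>S = 0\<close>
        w_nonneg that by (auto simp: G_def)
    ultimately show ?thesis
      using that by (auto simp: L_def G_def)
  qed
  have "(\<Sum>(x, y)\<in>L \<times> G. w x * w y / S * ((c y - v) * g x + (v - c x) * g y))
      = ((\<Sum>x\<in>L. w x * g x) * (\<Sum>y\<in>G. w y * (c y - v))
         + (\<Sum>x\<in>L. w x * (v - c x)) * (\<Sum>y\<in>G. w y * g y)) / S"
    unfolding sum_product sum.cartesian_product add_divide_distrib sum_divide_distrib
      sum.distrib[symmetric]
    by (intro sum.cong refl) (auto simp: divide_inverse algebra_simps)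
  also have "\<dots> = ((\<Sum>x\<in>L. w x * g x) * S + S * (\<Sum>y\<in>G. w y * g y)) / S"
    by (simp only: S_below S_above[symmetric])
  also have "\<dots> = (\<Sum>x\<in>L. w x * g x) + (\<Sum>y\<in>G. w y * g y)"
    using weightless_if_S0 by (cases "S = 0") (simp_all add: field_simps)
  finally show ?thesis
    using split[of "\<lambda>k. w k * g k"] by (simp add: E_def)
qed

lemma mean_two_point_mixture:
  fixes w c :: "'k \<Rightarrow> real"
  assumes "finite K" and w_nonneg: "\<And>k. k \<in> K \<Longrightarrow> 0 \<le> w k" and w_sum: "(\<Sum>k\<in>K. w k) = 1"
    and mean: "(\<Sum>k\<in>K. w k * c k) = v"
  defines "E \<equiv> {k\<in>K. c k = v}" and "P \<equiv> {k\<in>K. c k < v} \<times> {k\<in>K. v < c k}"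
  obtains \<mu> where "\<And>j. j \<in> E <+> P \<Longrightarrow> 0 \<le> \<mu> j" and "(\<Sum>j\<in>E <+> P. \<mu> j) = 1"
    and "\<And>g. (\<Sum>k\<in>K. w k * g k) = (\<Sum>j\<in>E <+> P. \<mu> j * case_sum g
           (\<lambda>(x, y). (c y - v) / (c y - c x) * g x + (v - c x) / (c y - c x) * g y) j)"
proof -
  define S where "S = (\<Sum>z\<in>{k\<in>K. v < c k}. w z * (c z - v))"
  define \<mu> where "\<mu> = case_sum w (\<lambda>(x, y). w x * w y / S * (c y - c x))"
  have fin: "finite E" "finite P"
    using \<open>finite K\<close> by (simp_all add: E_def P_def)
  have gap: "c x < c y" if "(x, y) \<in> P" for x y
    using that by (simp add: P_def)
  have pair_weight: "w x * w y / S * (c y - c x)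
        * ((c y - v) / (c y - c x) * a + (v - c x) / (c y - c x) * b)
      = w x * w y / S * ((c y - v) * a + (v - c x) * b)" if "(x, y) \<in> P" for x y a b
    using gap[OF that] by (simp add: distrib_left flip: mult.assoc)
  have centred: "(\<Sum>k\<in>K. w k * (c k - v)) = 0"
    using mean w_sum by (simp add: algebra_simps sum_subtractf flip: sum_distrib_left)
  have mixture: "(\<Sum>k\<in>K. w k * f k) = (\<Sum>j\<in>E <+> P. \<mu> j * case_sum f
      (\<lambda>(x, y). (c y - v) / (c y - c x) * f x + (v - c x) / (c y - c x) * f y) j)" for f
  proof -
    have "(\<Sum>k\<in>K. w k * f k) = (\<Sum>k\<in>E. w k * f k)
        + (\<Sum>(x, y)\<in>P. w x * w y / S * ((c y - v) * f x + (v - c x) * f y))"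
      using mean_two_point_decomposition[OF \<open>finite K\<close> w_nonneg centred, where g = f]
      by (simp add: E_def P_def S_def)
    also have "\<dots> = (\<Sum>j\<in>E <+> P. \<mu> j * case_sum f
        (\<lambda>(x, y). (c y - v) / (c y - c x) * f x + (v - c x) / (c y - c x) * f y) j)"
      unfolding sum.Plus[OF fin] \<mu>_def
      by (intro arg_cong2[where f = "(+)"] sum.cong refl)
        (auto simp: pair_weight simp del: times_divide_eq_left)
    finally show ?thesis .
  qed
  have nonneg: "0 \<le> \<mu> j" if "j \<in> E <+> P" for j
  proof -
    have "0 \<le> S"
      using w_nonneg by (auto simp: S_def intro!: sum_nonneg)
    then show ?thesis
      using that w_nonneg gap
      by (auto simp: \<mu>_def E_def P_def intro!: mult_nonneg_nonneg divide_nonneg_nonneg)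
  qed
  have "(\<Sum>j\<in>P. \<mu> (Inr j) * ((c (snd j) - v) / (c (snd j) - c (fst j))
                               + (v - c (fst j)) / (c (snd j) - c (fst j))))
      = (\<Sum>j\<in>P. \<mu> (Inr j))"
    by (intro sum.cong refl) (auto dest!: gap simp flip: add_divide_distrib)
  then have "(\<Sum>j\<in>E <+> P. \<mu> j) = 1"
    using mixture[of "\<lambda>_. 1"] w_sum by (simp add: sum.Plus[OF fin] case_prod_beta)
  then show thesis
    using that nonneg mixture by blast
qed

lemma sum_convex_le_two_point_mixtures:
  fixes \<phi> :: "real \<Rightarrow> real" and p :: "'k \<Rightarrow> 'i \<Rightarrow> real" and w c :: "'k \<Rightarrow> real"
  assumes cv: "convex_on C \<phi>" and "finite K" and p: "\<And>k i. k \<in> K \<Longrightarrow> i \<in> I \<Longrightarrow> p k i \<in> C"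
    and w: "\<And>k. k \<in> K \<Longrightarrow> 0 \<le> w k" "(\<Sum>k\<in>K. w k) = 1" "(\<Sum>k\<in>K. w k * c k) = v"
    and one_point: "\<And>x. x \<in> K \<Longrightarrow> c x = v \<Longrightarrow> (\<Sum>i\<in>I. \<phi> (p x i)) \<le> M"
    and two_point: "\<And>x y. x \<in> K \<Longrightarrow> y \<in> K \<Longrightarrow> c x < v \<Longrightarrow> v < c y \<Longrightarrow>
      (\<Sum>i\<in>I. \<phi> ((c y - v) / (c y - c x) * p x i + (v - c x) / (c y - c x) * p y i)) \<le> M"
  shows "(\<Sum>i\<in>I. \<phi> (\<Sum>k\<in>K. w k * p k i)) \<le> M"
proof -
  define E P where "E = {k\<in>K. c k = v}" and "P = {k\<in>K. c k < v} \<times> {k\<in>K. v < c k}"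
  define q where "q = case_sum p (\<lambda>(x, y) i. (c y - v) / (c y - c x) * p x i
                                          + (v - c x) / (c y - c x) * p y i)"
  obtain \<mu> where \<mu>: "\<And>j. j \<in> E <+> P \<Longrightarrow> 0 \<le> \<mu> j" "(\<Sum>j\<in>E <+> P. \<mu> j) = 1"
    and mixture: "\<And>g. (\<Sum>k\<in>K. w k * g k) = (\<Sum>j\<in>E <+> P. \<mu> j * case_sum g
           (\<lambda>(x, y). (c y - v) / (c y - c x) * g x + (v - c x) / (c y - c x) * g y) j)"
    using mean_two_point_mixture[OF \<open>finite K\<close> w] unfolding E_def P_def by blast
  have mixed: "(\<Sum>k\<in>K. w k * p k i) = (\<Sum>j\<in>E <+> P. \<mu> j * q j i)" for i
    unfolding mixture[of "\<lambda>k. p k i"] q_def by (intro sum.cong refl) (auto split: sum.split)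
  show ?thesis
    unfolding mixed
  proof (rule sum_convex_mixture_le[OF cv _ _ \<mu>])
    show "finite (E <+> P)"
      using \<open>finite K\<close> by (simp add: E_def P_def)
    show "E <+> P \<noteq> {}"
      using \<mu>(2) by (metis sum.empty zero_neq_one)
    show "q j i \<in> C" if j: "j \<in> E <+> P" and i: "i \<in> I" for j i
    proof (cases j)
      case (Inl k)
      then show ?thesis
        using j i p by (auto simp: q_def E_def)
    next
      case (Inr xy)
      then obtain x y where xy: "j = Inr (x, y)" "x \<in> K" "y \<in> K" "c x < v" "v < c y"
        using j by (auto simp: P_def)
      then have "0 \<le> (c y - v) / (c y - c x)" "0 \<le> (v - c x) / (c y - c x)"
        and "(c y - v) / (c y - c x) + (v - c x) / (c y - c x) = 1"
        by (simp_all add: zero_le_divide_iff flip: add_divide_distrib)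
      from convexD[OF convex_on_imp_convex[OF cv] p[OF xy(2) i] p[OF xy(3) i] this]
      show ?thesis
        using xy(1) by (simp add: q_def)
    qed
    show "(\<Sum>i\<in>I. \<phi> (q j i)) \<le> M" if j: "j \<in> E <+> P" for j
      using j one_point two_point by (auto simp: q_def E_def P_def)
  qed
qed

lemma hminus_pos:
  assumes "strict_mono_on {0..1} W" and "1 \<le> i" and "i \<le> N"
  shows "0 < hminus W N i"
proof -
  have "(real i - 1) / real N \<in> {0..1}" "real i / real N \<in> {0..1}"
    using assms(2,3) by (auto simp: field_simps)
  moreover have "(real i - 1) / real N < real i / real N"
    using assms(2,3) by (simp add: divide_strict_right_mono)
  ultimately show ?thesis
    using assms(1) by (simp add: hminus_def strict_mono_on_def)
qed

locale monotone_allocation =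
  fixes h :: "nat \<Rightarrow> real" and n :: nat and ymin v :: real
  assumes h_pos: "\<And>i. 1 \<le> i \<Longrightarrow> i \<le> n \<Longrightarrow> 0 < h i"
    and n_pos: "1 \<le> n" and ymin_pos: "0 < ymin"
    and v_nonneg: "0 \<le> v" and v_le: "v \<le> ymin * (\<Sum>i=1..n. h i)"
begin

definition level :: "nat \<Rightarrow> real" where
  "level k = ymin * (\<Sum>i=1..k. h i)"

definition stair :: "nat \<Rightarrow> nat \<Rightarrow> real" where
  "stair k i = (if 1 \<le> i \<and> i \<le> k then ymin else 0)"

definition fill :: "nat \<Rightarrow> nat \<Rightarrow> real" where
  "fill a b = (v - level a) / (\<Sum>i=a+1..b. h i)"

definition two_level :: "nat \<Rightarrow> nat \<Rightarrow> nat \<Rightarrow> real" where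
  "two_level a b i = (if 1 \<le> i \<and> i \<le> a then ymin else if a + 1 \<le> i \<and> i \<le> b then fill a b else 0)"

definition brackets :: "(nat \<times> nat) set" where
  "brackets = {(a, b). a < b \<and> b \<le> n \<and> level a \<le> v \<and> v \<le> level b}"

lemma level_add: "a \<le> b \<Longrightarrow> level b = level a + ymin * (\<Sum>i=a+1..b. h i)"
  using sum.ub_add_nat[of 1 a h "b - a"] by (simp add: level_def distrib_left)

lemma sum_h_pos: "a < b \<Longrightarrow> b \<le> n \<Longrightarrow> 0 < (\<Sum>i=a+1..b. h i)"
  by (intro sum_pos) (auto intro: h_pos)

lemma level_strict_mono: "a < b \<Longrightarrow> b \<le> n \<Longrightarrow> level a < level b"
  using level_add[of a b] sum_h_pos[of a b] ymin_pos by simp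

lemma level_less_iff: "a \<le> n \<Longrightarrow> b \<le> n \<Longrightarrow> level a < level b \<longleftrightarrow> a < b"
  using level_strict_mono[of a b] level_strict_mono[of b a] by (cases a b rule: linorder_cases) auto

lemma level_eq_sum_stair: "k \<le> n \<Longrightarrow> (\<Sum>i=1..n. h i * stair k i) = level k"
proof -
  assume "k \<le> n"
  then have "(\<Sum>i=1..n. h i * stair k i) = (\<Sum>i\<in>{1..k}. ymin * h i)"
    by (intro sum.mono_neutral_cong_right) (auto simp: stair_def)
  then show ?thesis
    by (simp add: level_def sum_distrib_left)
qed

lemma fill_bounds:
  assumes "(a, b) \<in> brackets"
  shows "0 \<le> fill a b" "fill a b \<le> ymin"
proof -
  have ab: "a < b" "b \<le> n" "level a \<le> v" "v \<le> level b"
    using assms by (auto simp: brackets_def)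
  show "0 \<le> fill a b"
    using ab sum_h_pos[of a b] by (simp add: fill_def)
  show "fill a b \<le> ymin"
    using ab sum_h_pos[of a b] level_add[of a b] by (simp add: fill_def divide_le_eq)
qed

lemma two_level_eq_mixture:
  assumes "(a, b) \<in> brackets"
  shows "two_level a b i = (level b - v) / (level b - level a) * stair a i
                           + (v - level a) / (level b - level a) * stair b i"
proof -
  have ab: "a < b" "b \<le> n"
    using assms by (auto simp: brackets_def)
  have gap: "level b - level a = ymin * (\<Sum>i=a+1..b. h i)"
    using level_add[of a b] ab by simp
  have "level b - level a > 0"
    using level_strict_mono ab by simp
  then have full: "(level b - v) * ymin / (level b - level a) + (v - level a) * ymin / (level b - level a)
      = ymin"
    by (simp flip: add_divide_distrib distrib_right)
  have fill: "fill a b = (v - level a) / (level b - level a) * ymin"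
    unfolding fill_def gap using ymin_pos sum_h_pos[OF ab] by simp
  consider "1 \<le> i \<and> i \<le> a" | "a < i \<and> i \<le> b" | "i = 0 \<or> b < i"
    by linarith
  then show ?thesis
  proof cases
    case 1
    then show ?thesis
      using ab full by (simp add: two_level_def stair_def)
  qed (use ab fill in \<open>auto simp: two_level_def stair_def\<close>)
qed

lemma two_level_feasible:
  assumes "(a, b) \<in> brackets"
  shows "feasible h n ymin v (two_level a b)"
proof -
  have ab: "a < b" "b \<le> n" "level a \<le> v" "v \<le> level b"
    using assms by (auto simp: brackets_def)
  have "level b - level a > 0"
    using level_strict_mono ab by simp
  have "(\<Sum>i=1..n. h i * two_level a b i)
      = (\<Sum>i=1..n. (level b - v) / (level b - level a) * (h i * stair a i)
                    + (v - level a) / (level b - level a) * (h i * stair b i))"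
    by (intro sum.cong refl) (simp add: two_level_eq_mixture[OF assms] algebra_simps)
  also have "\<dots> = (level b - v) / (level b - level a) * (\<Sum>i=1..n. h i * stair a i)
        + (v - level a) / (level b - level a) * (\<Sum>i=1..n. h i * stair b i)"
    by (simp add: sum.distrib sum_distrib_left)
  also have "\<dots> = ((level b - v) * level a + (v - level a) * level b) / (level b - level a)"
    using ab level_eq_sum_stair[of a] level_eq_sum_stair[of b] by (simp add: add_divide_distrib)
  also have "(level b - v) * level a + (v - level a) * level b = v * (level b - level a)"
    by (simp add: algebra_simps)
  also have "v * (level b - level a) / (level b - level a) = v"
    using \<open>level b - level a > 0\<close> by simp
  finally show ?thesis
    using fill_bounds[OF assms] ymin_pos by (auto simp: feasible_def two_level_def)
qed

lemma stair_eq_two_level: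
  assumes "k \<le> n" and "level k = v"
  obtains a b where "(a, b) \<in> brackets" and "\<And>i. two_level a b i = stair k i"
proof (cases "k < n")
  case True
  then have "(k, k + 1) \<in> brackets"
    using assms level_strict_mono[of k "k + 1"] by (simp add: brackets_def)
  then show ?thesis
    using that two_level_eq_mixture assms level_strict_mono[of k "k + 1"] True by simp
next
  case False
  then have "(n - 1, n) \<in> brackets" and "k = n"
    using assms n_pos level_strict_mono[of "n - 1" n] by (auto simp: brackets_def)
  then show ?thesis
    using that two_level_eq_mixture assms n_pos level_strict_mono[of "n - 1" n] by simp
qed

text \<open>The weight of \<open>stair k\<close> is the drop \<open>(z k - z (k + 1)) / ymin\<close>, with the conventions
  \<open>z 0 = ymin\<close> and \<open>z (n + 1) = 0\<close>.\<close>

lemma feasible_stair_mixture: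
  assumes "feasible h n ymin v z"
  obtains w where "\<And>k. k \<in> {0..n} \<Longrightarrow> 0 \<le> w k" and "(\<Sum>k=0..n. w k) = 1"
    and "(\<Sum>k=0..n. w k * level k) = v"
    and "\<And>i. i \<in> {1..n} \<Longrightarrow> z i = (\<Sum>k=0..n. w k * stair k i)"
proof
  define z' where "z' k = (if k = 0 then ymin else if k \<le> n then z k else 0)" for k
  define w where "w k = (z' k - z' (Suc k)) / ymin" for k
  have z_bounds: "z 1 \<le> ymin" "\<And>i. 1 \<le> i \<Longrightarrow> i < n \<Longrightarrow> z (i + 1) \<le> z i" "0 \<le> z n"
    and z_sum: "(\<Sum>i=1..n. h i * z i) = v"
    using assms by (auto simp: feasible_def)
  show w_nonneg: "0 \<le> w k" if "k \<in> {0..n}" for k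
    using that z_bounds n_pos ymin_pos z_bounds(2)[of k]
    by (auto simp: w_def z'_def le_Suc_eq not_less_eq_eq)
  have tail: "(\<Sum>k=i..n. w k) * ymin = z' i" if "i \<le> Suc n" for i
    using sum_Suc_diff[OF that, of "\<lambda>k. - z' k"] ymin_pos
    by (simp add: w_def z'_def flip: sum_divide_distrib)
  show "(\<Sum>k=0..n. w k) = 1"
    using tail[of 0] ymin_pos by (simp add: z'_def)
  show z_eq: "z i = (\<Sum>k=0..n. w k * stair k i)" if "i \<in> {1..n}" for i
  proof -
    have "(\<Sum>k=0..n. w k * stair k i) = (\<Sum>k=i..n. w k) * ymin"
      using that by (simp add: sum_distrib_right, intro sum.mono_neutral_cong_right)
        (auto simp: stair_def)
    then show ?thesis
      using tail[of i] that by (simp add: z'_def)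
  qed
  have "(\<Sum>k=0..n. w k * level k) = (\<Sum>k=0..n. \<Sum>i=1..n. h i * (w k * stair k i))"
    by (intro sum.cong refl)
      (simp add: level_eq_sum_stair[symmetric] sum_distrib_left mult.left_commute)
  also have "\<dots> = (\<Sum>i=1..n. h i * z i)"
    by (subst sum.swap) (simp add: z_eq flip: sum_distrib_left)
  finally show "(\<Sum>k=0..n. w k * level k) = v"
    using z_sum by simp
qed

lemma sum_convex_feasible_le:
  assumes cv: "convex_on {0..} \<phi>" and "feasible h n ymin v z"
    and bound: "\<And>a b. (a, b) \<in> brackets \<Longrightarrow> (\<Sum>i=1..n. \<phi> (two_level a b i)) \<le> M"
  shows "(\<Sum>i=1..n. \<phi> (z i)) \<le> M"
proof -
  obtain w where w: "\<And>k. k \<in> {0..n} \<Longrightarrow> 0 \<le> w k" "(\<Sum>k=0..n. w k) = 1"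
    "(\<Sum>k=0..n. w k * level k) = v"
    and z: "\<And>i. i \<in> {1..n} \<Longrightarrow> z i = (\<Sum>k=0..n. w k * stair k i)"
    using feasible_stair_mixture[OF \<open>feasible h n ymin v z\<close>] by blast
  have "(\<Sum>i=1..n. \<phi> (z i)) = (\<Sum>i=1..n. \<phi> (\<Sum>k=0..n. w k * stair k i))"
    by (intro sum.cong refl) (simp add: z)
  also have "\<dots> \<le> M"
  proof (rule sum_convex_le_two_point_mixtures[OF cv _ _ w])
    show "stair k i \<in> {0..}" for k i
      using ymin_pos by (simp add: stair_def)
    show "(\<Sum>i=1..n. \<phi> (stair k i)) \<le> M" if k: "k \<in> {0..n}" and level_k: "level k = v" for k
    proof -
      obtain a b where "(a, b) \<in> brackets" "\<And>i. two_level a b i = stair k i"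
        by (rule stair_eq_two_level[of k]) (use k level_k in auto)
      then show ?thesis
        using bound[of a b] by simp
    qed
    show "(\<Sum>i=1..n. \<phi> ((level b - v) / (level b - level a) * stair a i
                            + (v - level a) / (level b - level a) * stair b i)) \<le> M"
      if "a \<in> {0..n}" "b \<in> {0..n}" "level a < v" "v < level b" for a b
    proof -
      have "(a, b) \<in> brackets"
        using that level_less_iff[of a b] by (auto simp: brackets_def)
      then show ?thesis
        using bound[of a b] by (simp add: two_level_eq_mixture)
    qed
  qed simp
  finally show ?thesis .
qed

lemma two_level_maximizes:
  assumes "convex_on {0..} \<phi>"
  obtains a b where "(a, b) \<in> brackets"
    and "\<And>z. feasible h n ymin v z \<Longrightarrow> (\<Sum>i=1..n. \<phi> (z i)) \<le> (\<Sum>i=1..n. \<phi> (two_level a b i))"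
proof -
  define F where "F = (\<lambda>(a, b). \<Sum>i=1..n. \<phi> (two_level a b i))"
  have fin: "finite brackets"
    by (rule finite_subset[of _ "{0..n} \<times> {0..n}"]) (auto simp: brackets_def)
  have "(0, n) \<in> brackets"
    using n_pos v_nonneg v_le by (simp add: brackets_def level_def)
  then have "Max (F ` brackets) \<in> F ` brackets"
    using fin by (intro Max_in) auto
  then obtain a b where ab: "(a, b) \<in> brackets" and "F (a, b) = Max (F ` brackets)"
    by auto
  then have "F (x, y) \<le> F (a, b)" if "(x, y) \<in> brackets" for x y
    using that fin by simp
  then show thesis
    using that[OF ab] sum_convex_feasible_le[OF assms] by (simp add: F_def)
qed

end

theorem proposition3:
  fixes N nm :: nat and \<beta> lam ymin v :: real and W :: "real \<Rightarrow> real"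
  assumes "N \<ge> 1" and "0 < \<beta>" and "\<beta> < 1" and "lam > 0"
    and "1 \<le> nm" and "nm \<le> N"
    and "inverse_S_shaped W" and "W 0 = 0" and "W 1 = 1"
    and "W ` {0..1} \<subseteq> {0..1}"
    and "ymin > 0"
    and "0 \<le> v" and "v \<le> ymin * (\<Sum>i=1..nm. hminus W N i)"
  shows "\<exists>l1 l2 :: nat. l1 < l2 \<and> l2 \<le> nm \<and>
     (let Y = (v - ymin * (\<Sum>i=1..l1. hminus W N i)) / (\<Sum>i=l1+1..l2. hminus W N i)
      in 0 \<le> Y \<and> Y \<le> ymin \<and>
         optimal (hminus W N) nm ymin v \<beta> lam
           (\<lambda>i. if 1 \<le> i \<and> i \<le> l1 then ymin
                else if l1 + 1 \<le> i \<and> i \<le> l2 then Y else 0))"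
proof -
  have "strict_mono_on {0..1} W"
    using assms(7) by (simp add: inverse_S_shaped_def)
  then interpret monotone_allocation "hminus W N" nm ymin v
    using assms hminus_pos[of W] by unfold_locales auto
  have "convex_on {0..} (\<lambda>x. (x / lam) powr (1 / \<beta>))"
    unfolding powr_divide using assms(2,3)
    by (intro convex_on_cdiv convex_on_powr_nonneg) auto
  then obtain a b where ab: "(a, b) \<in> brackets"
    and max: "\<And>z. feasible (hminus W N) nm ymin v z \<Longrightarrow>
      (\<Sum>i=1..nm. (z i / lam) powr (1 / \<beta>)) \<le> (\<Sum>i=1..nm. (two_level a b i / lam) powr (1 / \<beta>))"
    using two_level_maximizes by blast
  have two_level_eq: "two_level a b = (\<lambda>i. if 1 \<le> i \<and> i \<le> a then ymin
      else if a + 1 \<le> i \<and> i \<le> b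
           then (v - ymin * (\<Sum>i=1..a. hminus W N i)) / (\<Sum>i=a+1..b. hminus W N i) else 0)"
    by (simp add: fun_eq_iff two_level_def fill_def level_def)
  have "optimal (hminus W N) nm ymin v \<beta> lam (two_level a b)"
    using two_level_feasible[OF ab] max by (auto simp: optimal_def objective_def)
  then show ?thesis
    using ab fill_bounds[OF ab] unfolding two_level_eq Let_def fill_def level_def
    by (intro exI[of _ a] exI[of _ b]) (simp add: brackets_def)
qed

end
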